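(* Let $E\in C^\infty[-1,1]$. For every $n\ge1$, $l\in\mathbb Z$ and $s\in\mathbb Z_{\ge0}$, $$\sum_{t\ge0}\phi_{n-1}(s,t)\,\Psi^n_{r_n-l}(t)=\Psi^{n-1}_{r_{n-1}-l}(s).$$
   Context: For $n\ge0$: $r_n=\lfloor(n+1)/2\rfloor$, $\alpha_n=1/2$ if $n$ even and $-1/2$ if $n$ odd, and $\phi_n(s,t)=2\cdot1_{(s<t)}$ if $n$ even, $\phi_n(s,t)=1_{(s\le t)}$ if $n$ odd ($s,t\in\mathbb Z_{\ge0}$). Chebyshev polynomials: $J_{0,\pm1/2}=1$, $J_{1,1/2}(x)=2x$, $J_{1,-1/2}(x)=2x-1$, both satisfying $xp_k=\frac12p_{k+1}+\frac12p_{k-1}$, $k\ge1$. $\langle f,g\rangle_\alpha=\frac{2^{\alpha+1/2}}{\pi}\int_{-1}^1fg(1-x)^\alpha(1+x)^{1/2}dx$. Taylor remainder about $1$: $R^E_m=E$ for $m\le0$ and $R^E_m(x)=E(x)-\sum_{k=0}^{m-1}\frac{E^{(k)}(1)}{k!}(x-1)^k$ for $m\ge1$. Define $\Psi^n_{r_n-l}(s)=\langle J_{s,\alpha_n},(x-1)^{r_n-l}R^E_{l-r_n}\rangle_{\alpha_n}$. *)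

theory Defs
  imports "HOL-Analysis.Analysis"
begin

definition r_idx :: "nat \<Rightarrow> nat" where
  "r_idx n = (n + 1) div 2"

definition alpha_idx :: "nat \<Rightarrow> real" where
  "alpha_idx n = (if even n then 1/2 else -1/2)"

definition phi_idx :: "nat \<Rightarrow> nat \<Rightarrow> nat \<Rightarrow> real" where
  "phi_idx n s t = (if even n then 2 * (if s < t then 1 else 0) else (if s \<le> t then 1 else 0))"

text \<open>Chebyshev polynomials J_{k,alpha} for alpha = 1/2 (second kind) and alpha = -1/2
  (third kind), via x p_k = 1/2 p_{k+1} + 1/2 p_{k-1}.\<close>
fun chebJ :: "nat \<Rightarrow> real \<Rightarrow> real \<Rightarrow> real" where
  "chebJ 0 \<alpha> x = 1"
| "chebJ (Suc 0) \<alpha> x = (if \<alpha> = 1/2 then 2 * x else 2 * x - 1)"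
| "chebJ (Suc (Suc k)) \<alpha> x = 2 * x * chebJ (Suc k) \<alpha> x - chebJ k \<alpha> x"

definition wip :: "real \<Rightarrow> (real \<Rightarrow> real) \<Rightarrow> (real \<Rightarrow> real) \<Rightarrow> real" where
  "wip \<alpha> f g = 2 powr (\<alpha> + 1/2) / pi *
     integral {-1..1} (\<lambda>x. f x * g x * (1 - x) powr \<alpha> * (1 + x) powr (1/2))"

text \<open>E is C^\<infinity> on [-1,1] with derivative family D (D k = k-th derivative of E,
  one-sided at the endpoints).\<close>
definition smooth_with_derivs :: "(real \<Rightarrow> real) \<Rightarrow> (nat \<Rightarrow> real \<Rightarrow> real) \<Rightarrow> bool" where
  "smooth_with_derivs E D \<longleftrightarrow> (\<forall>x\<in>{-1..1}. D 0 x = E x) \<and>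
     (\<forall>k. \<forall>x\<in>{-1..1}. (D k has_real_derivative D (Suc k) x) (at x within {-1..1}))"

definition taylor_rem :: "(real \<Rightarrow> real) \<Rightarrow> (nat \<Rightarrow> real \<Rightarrow> real) \<Rightarrow> int \<Rightarrow> real \<Rightarrow> real" where
  "taylor_rem E D m x = (if m \<le> 0 then E x
     else E x - (\<Sum>k<nat m. D k 1 / fact k * (x - 1) ^ k))"

definition Psi :: "(real \<Rightarrow> real) \<Rightarrow> (nat \<Rightarrow> real \<Rightarrow> real) \<Rightarrow> nat \<Rightarrow> int \<Rightarrow> nat \<Rightarrow> real" where
  "Psi E D n m s = wip (alpha_idx n) (chebJ s (alpha_idx n))
      (\<lambda>x. (x - 1) powi m * taylor_rem E D (- m) x)"

end

theory Submission
  imports Defs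
begin

text \<open>
  Under \<open>x = cos \<theta>\<close> the polynomials J(k,1/2) and J(k,-1/2) become \<open>sin ((k+1)\<theta>) / sin \<theta>\<close>
  and \<open>cos ((k+1/2)\<theta>) / cos (\<theta>/2)\<close>, so they are orthonormal for the inner products with
  exponents 1/2 and -1/2, and by Bessel's inequality the coefficients of a continuous function
  tend to 0. The function \<open>g m = (x-1)^m R(-m)\<close> extends continuously to [-1,1] (Taylor's
  theorem) and satisfies \<open>g m = (x-1) g (m-1) + const\<close>, the constant being orthogonal to every
  J(t+1,-1/2). With \<open>2(1-x) J(t,1/2) = J(t,-1/2) - J(t+1,-1/2)\<close> and
  \<open>J(t+1,-1/2) = J(t+1,1/2) - J(t,1/2)\<close> this writes each term of the series as \<open>b t - b (t+1)\<close>
  for \<open>t \<ge> s\<close> (and 0 below), where b is the \<open>\<Psi>\<close> of level n-1; so the series telescopes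
  to \<open>b s\<close>.
\<close>

section \<open>Chebyshev polynomials of the second and third kind\<close>

lemma chebJ_third_kind_eq_diff:
  "chebJ (Suc t) (-1/2) x = chebJ (Suc t) (1/2) x - chebJ t (1/2) x"
proof (induction t rule: induct_nat_012)
  case (ge2 t)
  have U: "chebJ (Suc (Suc t)) (1/2) x = 2 * x * chebJ (Suc t) (1/2) x - chebJ t (1/2) x"
    by (rule chebJ.simps(3))
  show ?case
    unfolding chebJ.simps(3)[of "Suc t"] ge2 U by (simp add: algebra_simps)
qed (simp_all add: algebra_simps)

lemma chebJ_second_kind_telescope:
  "2 * (1 - x) * chebJ t (1/2) x = chebJ t (-1/2) x - chebJ (Suc t) (-1/2) x"
proof (cases t)
  case (Suc t')
  then show ?thesis
    using chebJ_third_kind_eq_diff[of t' x] chebJ_third_kind_eq_diff[of "Suc t'" x]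
    by (simp add: algebra_simps)
qed simp

lemma continuous_on_chebJ: "continuous_on S (chebJ k a)"
proof (induction k rule: induct_nat_012)
  case 1
  then show ?case by (cases "a = 1/2") (auto intro!: continuous_intros)
qed (auto intro!: continuous_intros)

lemma chebJ_second_kind_cos: "chebJ k (1/2) (cos \<theta>) * sin \<theta> = sin (real (Suc k) * \<theta>)"
proof (induction k rule: induct_nat_012)
  case 1
  then show ?case using sin_double[of \<theta>] by (simp add: algebra_simps)
next
  case (ge2 k)
  let ?u = "real (Suc (Suc k)) * \<theta>"
  have "chebJ (Suc (Suc k)) (1/2) (cos \<theta>) * sin \<theta>
      = 2 * cos \<theta> * (chebJ (Suc k) (1/2) (cos \<theta>) * sin \<theta>) - chebJ k (1/2) (cos \<theta>) * sin \<theta>"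
    unfolding chebJ.simps(3) by (simp add: algebra_simps)
  also have "\<dots> = 2 * cos \<theta> * sin ?u - sin (?u - \<theta>)"
    using ge2 by (simp add: algebra_simps)
  also have "\<dots> = sin (?u + \<theta>)"
    by (simp add: sin_add sin_diff)
  finally show ?case by (simp add: algebra_simps)
qed simp

lemma chebJ_third_kind_cos:
  "chebJ k (-1/2) (cos \<theta>) * cos (\<theta>/2) = cos ((real k + 1/2) * \<theta>)"
proof (induction k rule: induct_nat_012)
  case 1
  have c: "cos ((1 + 1/2) * \<theta>) = cos \<theta> * cos (\<theta>/2) - (2 * sin (\<theta>/2)^2) * cos (\<theta>/2)"
    using cos_add[of \<theta> "\<theta>/2"] sin_double[of "\<theta>/2"] by (simp add: power2_eq_square algebra_simps)
  have s: "2 * sin (\<theta>/2)^2 = 1 - cos \<theta>"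
    using cos_double_sin[of "\<theta>/2"] by simp
  show ?case using c unfolding s by (simp add: algebra_simps)
next
  case (ge2 k)
  let ?u = "(real (Suc k) + 1/2) * \<theta>"
  have "chebJ (Suc (Suc k)) (-1/2) (cos \<theta>) * cos (\<theta>/2)
      = 2 * cos \<theta> * (chebJ (Suc k) (-1/2) (cos \<theta>) * cos (\<theta>/2)) - chebJ k (-1/2) (cos \<theta>) * cos (\<theta>/2)"
    unfolding chebJ.simps(3) by (simp add: algebra_simps)
  also have "\<dots> = 2 * cos \<theta> * cos ?u - cos (?u - \<theta>)"
    using ge2 by (simp add: algebra_simps)
  also have "\<dots> = cos (?u + \<theta>)"
    by (simp add: cos_add cos_diff)
  finally show ?case by (simp add: algebra_simps)
qed simp

section \<open>The weighted inner products in the angle variable\<close>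

lemma has_integral_arccos_subst:
  fixes f Q :: "real \<Rightarrow> real"
  assumes cQ: "continuous_on {0..pi} Q"
    and eq: "\<And>x. -1 < x \<Longrightarrow> x < 1 \<Longrightarrow> Q (arccos x) / sqrt (1 - x\<^sup>2) = f x"
  shows "(f has_integral integral {0..pi} Q) {-1..1}"
proof -
  have deriv: "(arccos has_field_derivative inverse (- sqrt (1 - x\<^sup>2))) (at x within {-1..1})"
    if "x \<in> {-1..1} - {-1, 1}" for x
    using that by (intro has_field_derivative_at_within[OF DERIV_arccos]) auto
  have "((\<lambda>x. inverse (- sqrt (1 - x\<^sup>2)) *\<^sub>R Q (arccos x)) has_integral
      integral {arccos (-1)..arccos 1} Q - integral {arccos 1..arccos (-1)} Q) {-1..1}"
    by (rule has_integral_substitution_general[where s="{-1, 1}", OF _ _ _ cQ continuous_on_arccos' deriv])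
       (use arccos_lbound arccos_ubound in auto)
  then have "((\<lambda>x. - (Q (arccos x) / sqrt (1 - x\<^sup>2))) has_integral - integral {0..pi} Q) {-1..1}"
    by (simp add: divide_inverse mult.commute)
  from has_integral_neg[OF this]
  have "((\<lambda>x. Q (arccos x) / sqrt (1 - x\<^sup>2)) has_integral integral {0..pi} Q) {-1..1}"
    by simp
  then show ?thesis
    by (rule has_integral_spike_finite[of "{-1, 1}", rotated 2]) (auto simp: eq)
qed

definition cheb_weight :: "real \<Rightarrow> real \<Rightarrow> real" where
  "cheb_weight a x = (1 - x) powr a * (1 + x) powr (1/2)"

lemma wip_eq_integral_cheb_weight:
  "wip a f g = 2 powr (a + 1/2) / pi * integral {-1..1} (\<lambda>x. f x * g x * cheb_weight a x)"
  unfolding wip_def cheb_weight_def by (simp add: mult.assoc)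

lemma cheb_weight_nonneg: "cheb_weight a x \<ge> 0"
  unfolding cheb_weight_def by simp

lemma cheb_weight_half_eq: "x \<le> 1 \<Longrightarrow> (1 - x) * cheb_weight (-1/2) x = cheb_weight (1/2) x"
proof (cases "x = 1")
  case False
  assume "x \<le> 1"
  with False have "(1 - x) powr (1/2) = (1 - x) * (1 - x) powr (-1/2)"
    using powr_add[of "1 - x" 1 "-1/2"] by simp
  then show ?thesis unfolding cheb_weight_def by (simp only: mult.assoc)
qed (simp add: cheb_weight_def)

lemma has_integral_cheb_weight_half:
  assumes "continuous_on {-1..1} F"
  shows "((\<lambda>x. F x * cheb_weight (1/2) x) has_integral
           integral {0..pi} (\<lambda>t. F (cos t) * (sin t)\<^sup>2)) {-1..1}"
proof (rule has_integral_arccos_subst)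
  show "continuous_on {0..pi} (\<lambda>t. F (cos t) * (sin t)\<^sup>2)"
    by (intro continuous_intros continuous_on_compose2[OF assms]) auto
next
  fix x :: real assume x: "-1 < x" "x < 1"
  have "cheb_weight (1/2) x = sqrt (1 - x\<^sup>2)"
    using x by (simp add: cheb_weight_def powr_half_sqrt real_sqrt_mult[symmetric] power2_eq_square algebra_simps)
  moreover have "(1 - x\<^sup>2) / sqrt (1 - x\<^sup>2) = sqrt (1 - x\<^sup>2)"
    using x by (simp add: real_div_sqrt abs_square_le_1)
  moreover have "(sin (arccos x))\<^sup>2 = 1 - x\<^sup>2"
    using x by (simp add: sin_arccos abs_square_le_1)
  ultimately show "F (cos (arccos x)) * (sin (arccos x))\<^sup>2 / sqrt (1 - x\<^sup>2) = F x * cheb_weight (1/2) x"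
    using x by (simp only: cos_arccos times_divide_eq_right[symmetric])
qed

lemma has_integral_cheb_weight_neg_half:
  assumes "continuous_on {-1..1} F"
  shows "((\<lambda>x. F x * cheb_weight (-1/2) x) has_integral
           integral {0..pi} (\<lambda>t. F (cos t) * (1 + cos t))) {-1..1}"
proof (rule has_integral_arccos_subst)
  show "continuous_on {0..pi} (\<lambda>t. F (cos t) * (1 + cos t))"
    by (intro continuous_intros continuous_on_compose2[OF assms]) auto
next
  fix x :: real assume x: "-1 < x" "x < 1"
  have "sqrt (1 - x\<^sup>2) = sqrt (1 - x) * sqrt (1 + x)"
    by (simp add: real_sqrt_mult[symmetric] algebra_simps power2_eq_square)
  moreover have "1 + x = sqrt (1 + x) * sqrt (1 + x)" using x by simp
  ultimately have "(1 + x) / sqrt (1 - x\<^sup>2) = sqrt (1 + x) / sqrt (1 - x)"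
    using x by (simp add: field_simps)
  also have "\<dots> = cheb_weight (-1/2) x"
    using x by (simp add: cheb_weight_def powr_minus_divide powr_half_sqrt)
  finally show "F (cos (arccos x)) * (1 + cos (arccos x)) / sqrt (1 - x\<^sup>2) = F x * cheb_weight (-1/2) x"
    using x by (simp only: cos_arccos times_divide_eq_right[symmetric])
qed

lemma integrable_cheb_weight:
  assumes "a = 1/2 \<or> a = -1/2" "continuous_on {-1..1} F"
  shows "(\<lambda>x. F x * cheb_weight a x) integrable_on {-1..1}"
  using assms has_integral_cheb_weight_half has_integral_cheb_weight_neg_half by blast

section \<open>Orthonormality and decay of Chebyshev coefficients\<close>

lemma has_integral_cos_int_mult:
  "((\<lambda>t. cos (of_int n * t)) has_integral (if n = 0 then pi else 0)) {0..pi}"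
proof (cases "n = 0")
  case True
  have "((\<lambda>x. 1::real) has_integral pi) {0..pi}"
    using has_integral_const_real[of "1::real" 0 pi] by (simp add: pi_ge_zero)
  then show ?thesis using True by simp
next
  case False
  have "((\<lambda>t. cos (of_int n * t)) has_integral
      (sin (of_int n * pi) / of_int n - sin (of_int n * 0) / of_int n)) {0..pi}"
  proof (rule fundamental_theorem_of_calculus)
    fix x :: real
    have "((\<lambda>t. sin (of_int n * t) / of_int n) has_real_derivative
        (cos (of_int n * x) * (of_int n * 1) / of_int n)) (at x within {0..pi})"
      using \<open>n \<noteq> 0\<close> by (intro derivative_eq_intros) auto
    then show "((\<lambda>t. sin (of_int n * t) / of_int n) has_vector_derivative cos (of_int n * x))
        (at x within {0..pi})"
      using False by (simp add: has_real_derivative_iff_has_vector_derivative)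
  qed simp
  moreover have "sin (of_int n * pi) = 0" by (simp add: sin_zero_iff_int2)
  ultimately show ?thesis using \<open>n \<noteq> 0\<close> by auto
qed

lemma has_integral_sin_mult_sin:
  "((\<lambda>t. sin (real (Suc j) * t) * sin (real (Suc k) * t)) has_integral (if j = k then pi/2 else 0))
     {0..pi}"
proof -
  have e: "sin (real (Suc j) * t) * sin (real (Suc k) * t) =
     (cos (of_int (int j - int k) * t) - cos (of_int (int j + int k + 2) * t)) / 2" for t
    by (simp add: sin_times_sin algebra_simps)
  have "((\<lambda>t. (cos (of_int (int j - int k) * t) - cos (of_int (int j + int k + 2) * t)) / 2) has_integral
     ((if int j - int k = 0 then pi else 0) - (if int j + int k + 2 = 0 then pi else 0)) / 2) {0..pi}"
    by (intro has_integral_divide has_integral_diff has_integral_cos_int_mult)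
  then show ?thesis unfolding e by (simp split: if_splits)
qed

lemma has_integral_cos_mult_cos:
  "((\<lambda>t. cos ((real j + 1/2) * t) * cos ((real k + 1/2) * t)) has_integral (if j = k then pi/2 else 0))
     {0..pi}"
proof -
  have e: "cos ((real j + 1/2) * t) * cos ((real k + 1/2) * t) =
     (cos (of_int (int j - int k) * t) + cos (of_int (int j + int k + 1) * t)) / 2" for t
    by (simp add: cos_times_cos algebra_simps)
  have "((\<lambda>t. (cos (of_int (int j - int k) * t) + cos (of_int (int j + int k + 1) * t)) / 2) has_integral
     ((if int j - int k = 0 then pi else 0) + (if int j + int k + 1 = 0 then pi else 0)) / 2) {0..pi}"
    by (intro has_integral_divide has_integral_add has_integral_cos_int_mult)
  then show ?thesis unfolding e by (simp split: if_splits)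
qed

lemma wip_chebJ_second_kind_orthonormal:
  "wip (1/2) (chebJ j (1/2)) (chebJ k (1/2)) = (if j = k then 1 else 0)"
proof -
  have "((\<lambda>x. chebJ j (1/2) x * chebJ k (1/2) x * cheb_weight (1/2) x) has_integral
      integral {0..pi} (\<lambda>t. chebJ j (1/2) (cos t) * chebJ k (1/2) (cos t) * (sin t)\<^sup>2)) {-1..1}"
    by (intro has_integral_cheb_weight_half continuous_intros continuous_on_chebJ)
  moreover have "chebJ j (1/2) (cos t) * chebJ k (1/2) (cos t) * (sin t)\<^sup>2
      = sin (real (Suc j) * t) * sin (real (Suc k) * t)" for t
  proof -
    have "chebJ j (1/2) (cos t) * chebJ k (1/2) (cos t) * (sin t)\<^sup>2
        = (chebJ j (1/2) (cos t) * sin t) * (chebJ k (1/2) (cos t) * sin t)"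
      by (simp add: power2_eq_square algebra_simps)
    then show ?thesis by (simp only: chebJ_second_kind_cos)
  qed
  ultimately have "integral {-1..1} (\<lambda>x. chebJ j (1/2) x * chebJ k (1/2) x * cheb_weight (1/2) x)
      = (if j = k then pi/2 else 0)"
    using integral_unique[OF has_integral_sin_mult_sin] by (simp add: integral_unique)
  then show ?thesis unfolding wip_eq_integral_cheb_weight by simp
qed

lemma wip_chebJ_third_kind_orthonormal:
  "wip (-1/2) (chebJ j (-1/2)) (chebJ k (-1/2)) = (if j = k then 1 else 0)"
proof -
  have "((\<lambda>x. chebJ j (-1/2) x * chebJ k (-1/2) x * cheb_weight (-1/2) x) has_integral
      integral {0..pi} (\<lambda>t. chebJ j (-1/2) (cos t) * chebJ k (-1/2) (cos t) * (1 + cos t))) {-1..1}"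
    by (intro has_integral_cheb_weight_neg_half continuous_intros continuous_on_chebJ)
  moreover have "chebJ j (-1/2) (cos t) * chebJ k (-1/2) (cos t) * (1 + cos t)
      = 2 * (cos ((real j + 1/2) * t) * cos ((real k + 1/2) * t))" for t
  proof -
    have "1 + cos t = 2 * cos (t/2) * cos (t/2)"
      using cos_double_cos[of "t/2"] by (simp add: power2_eq_square)
    then have "chebJ j (-1/2) (cos t) * chebJ k (-1/2) (cos t) * (1 + cos t)
        = 2 * ((chebJ j (-1/2) (cos t) * cos (t/2)) * (chebJ k (-1/2) (cos t) * cos (t/2)))"
      by (simp add: algebra_simps)
    then show ?thesis by (simp only: chebJ_third_kind_cos)
  qed
  moreover have "integral {0..pi} (\<lambda>t. 2 * (cos ((real j + 1/2) * t) * cos ((real k + 1/2) * t)))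
      = (if j = k then pi else 0)"
    using integral_unique[OF has_integral_mult_right[OF has_integral_cos_mult_cos, of 2 j k]] by simp
  ultimately have "integral {-1..1} (\<lambda>x. chebJ j (-1/2) x * chebJ k (-1/2) x * cheb_weight (-1/2) x)
      = (if j = k then pi else 0)"
    by (simp add: integral_unique)
  then show ?thesis unfolding wip_eq_integral_cheb_weight by simp
qed

locale weighted_orthonormal =
  fixes w :: "real \<Rightarrow> real" and C :: real and \<phi> :: "nat \<Rightarrow> real \<Rightarrow> real"
  assumes integrable_weighted:
      "\<And>F. continuous_on {-1..1} F \<Longrightarrow> (\<lambda>x. F x * w x) integrable_on {-1..1}"
    and weight_nonneg: "\<And>x. w x \<ge> 0"
    and normalisation_pos: "C > 0"
    and continuous_basis: "\<And>N. continuous_on {-1..1} (\<phi> N)"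
    and orthonormal:
      "\<And>j k. C * integral {-1..1} (\<lambda>x. \<phi> j x * \<phi> k x * w x) = (if j = k then 1 else 0)"
begin

definition coeff :: "(real \<Rightarrow> real) \<Rightarrow> nat \<Rightarrow> real" where
  "coeff g N = C * integral {-1..1} (\<lambda>x. \<phi> N x * g x * w x)"

lemma bessel_inequality:
  assumes cg: "continuous_on {-1..1} g"
  shows "(\<Sum>N<M. (coeff g N)\<^sup>2) \<le> C * integral {-1..1} (\<lambda>x. g x * g x * w x)"
proof -
  define c where "c = coeff g"
  define IA where "IA = integral {-1..1} (\<lambda>x. g x * g x * w x)"
  have hA: "((\<lambda>x. g x * g x * w x) has_integral IA) {-1..1}"
    unfolding IA_def using integrable_weighted[of "\<lambda>x. g x * g x"] cg by (auto intro!: continuous_intros)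
  have hB: "((\<lambda>x. \<phi> N x * g x * w x) has_integral (c N / C)) {-1..1}" for N
    unfolding c_def coeff_def using integrable_weighted[of "\<lambda>x. \<phi> N x * g x"] cg continuous_basis[of N] normalisation_pos
    by (auto intro!: continuous_intros)
  have hD: "((\<lambda>x. \<phi> N x * \<phi> K x * w x) has_integral ((if N = K then 1 else 0) / C)) {-1..1}" for N K
  proof -
    have "((\<lambda>x. \<phi> N x * \<phi> K x * w x) has_integral integral {-1..1} (\<lambda>x. \<phi> N x * \<phi> K x * w x)) {-1..1}"
      using integrable_weighted[of "\<lambda>x. \<phi> N x * \<phi> K x"] continuous_basis[of N] continuous_basis[of K]
      by (auto intro!: continuous_intros)
    moreover have "integral {-1..1} (\<lambda>x. \<phi> N x * \<phi> K x * w x) = (if N = K then 1 else 0) / C"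
      using orthonormal[of N K] normalisation_pos by (simp add: field_simps)
    ultimately show ?thesis by simp
  qed
  define S where "S x = (\<Sum>N<M. c N * \<phi> N x)" for x
  have expand: "(g x - S x)\<^sup>2 * w x = g x * g x * w x - 2 * (\<Sum>N<M. c N * (\<phi> N x * g x * w x))
      + (\<Sum>N<M. \<Sum>K<M. c N * c K * (\<phi> N x * \<phi> K x * w x))" for x
  proof -
    have "S x * g x * w x = (\<Sum>N<M. c N * (\<phi> N x * g x * w x))"
      unfolding S_def by (simp add: sum_distrib_right mult.assoc)
    moreover have "S x * S x * w x = (\<Sum>N<M. \<Sum>K<M. c N * c K * (\<phi> N x * \<phi> K x * w x))"
    proof -
      have "S x * S x = (\<Sum>N<M. \<Sum>K<M. (c N * \<phi> N x) * (c K * \<phi> K x))"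
        unfolding S_def by (rule sum_product)
      then have "S x * S x * w x = (\<Sum>N<M. \<Sum>K<M. (c N * \<phi> N x) * (c K * \<phi> K x) * w x)"
        by (simp add: sum_distrib_right)
      then show ?thesis by (simp add: mult_ac)
    qed
    moreover have "(g x - S x)\<^sup>2 * w x = g x * g x * w x - 2 * (S x * g x * w x) + S x * S x * w x"
      by (simp add: power2_eq_square algebra_simps)
    ultimately show ?thesis by simp
  qed
  have diag: "(\<Sum>N<M. \<Sum>K<M. c N * c K * ((if N = K then 1 else 0) / C)) = (\<Sum>N<M. c N * (c N / C))"
  proof (rule sum.cong[OF refl])
    fix N assume "N \<in> {..<M}"
    then have "(\<Sum>K<M. c N * c K * ((if N = K then 1 else 0) / C)) = (\<Sum>K\<in>{N}. c N * c K / C)"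
      by (intro sum.mono_neutral_cong_right) auto
    then show "(\<Sum>K<M. c N * c K * ((if N = K then 1 else 0) / C)) = c N * (c N / C)" by simp
  qed
  have "((\<lambda>x. (g x - S x)\<^sup>2 * w x) has_integral
      IA - 2 * (\<Sum>N<M. c N * (c N / C)) + (\<Sum>N<M. \<Sum>K<M. c N * c K * ((if N = K then 1 else 0) / C))) {-1..1}"
    unfolding expand
    by (intro has_integral_add has_integral_diff hA has_integral_mult_right has_integral_sum hB hD finite_lessThan)
  then have "0 \<le> IA - 2 * (\<Sum>N<M. c N * (c N / C)) + (\<Sum>N<M. \<Sum>K<M. c N * c K * ((if N = K then 1 else 0) / C))"
    by (rule has_integral_nonneg) (simp add: weight_nonneg)
  then have "0 \<le> IA - (\<Sum>N<M. c N * (c N / C))"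
    unfolding diag by linarith
  moreover have "(\<Sum>N<M. c N * (c N / C)) = (\<Sum>N<M. (c N)\<^sup>2) / C"
    by (simp add: sum_divide_distrib power2_eq_square)
  ultimately show ?thesis
    using normalisation_pos unfolding c_def IA_def by (simp add: pos_divide_le_eq mult.commute)
qed

lemma coeff_tendsto_zero:
  assumes "continuous_on {-1..1} g"
  shows "coeff g \<longlonglongrightarrow> 0"
proof -
  have "summable (\<lambda>N. (coeff g N)\<^sup>2)"
    by (rule summableI_nonneg_bounded[OF _ bessel_inequality[OF assms]]) simp
  then have "(\<lambda>N. (coeff g N)\<^sup>2) \<longlonglongrightarrow> 0"
    by (rule summable_LIMSEQ_zero)
  then have "(\<lambda>N. sqrt ((coeff g N)\<^sup>2)) \<longlonglongrightarrow> sqrt 0"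
    by (rule tendsto_real_sqrt)
  then show ?thesis
    by (simp add: tendsto_rabs_zero_iff)
qed

end

lemma wip_chebJ_tendsto_zero:
  assumes "a = 1/2 \<or> a = -1/2" and "continuous_on {-1..1} g"
  shows "(\<lambda>N. wip a (chebJ N a) g) \<longlonglongrightarrow> 0"
proof -
  interpret weighted_orthonormal "cheb_weight a" "2 powr (a + 1/2) / pi" "\<lambda>N. chebJ N a"
  proof
    show "\<And>j k. 2 powr (a + 1/2) / pi * integral {-1..1} (\<lambda>x. chebJ j a x * chebJ k a x * cheb_weight a x)
        = (if j = k then 1 else 0)"
      using assms(1) wip_chebJ_second_kind_orthonormal wip_chebJ_third_kind_orthonormal
      unfolding wip_eq_integral_cheb_weight by blast
  qed (use assms(1) integrable_cheb_weight cheb_weight_nonneg continuous_on_chebJ in auto)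
  show ?thesis
    using coeff_tendsto_zero[OF assms(2)] unfolding coeff_def wip_eq_integral_cheb_weight .
qed

section \<open>Taylor quotients\<close>

lemma has_real_derivative_taylor_poly:
  "((\<lambda>x::real. \<Sum>j<Suc k. a j / fact j * (x - 1) ^ j) has_real_derivative
     (\<Sum>j<k. a (Suc j) / fact j * (x - 1) ^ j)) (at x)"
proof (induction k)
  case (Suc k)
  have "((\<lambda>x::real. a (Suc k) / fact (Suc k) * (x - 1) ^ Suc k) has_real_derivative
      a (Suc k) / fact (Suc k) * (real (Suc k) * (x - 1) ^ k * 1)) (at x)"
    by (intro derivative_eq_intros) auto
  moreover have "a (Suc k) / fact (Suc k) * (real (Suc k) * (x - 1) ^ k * 1) = a (Suc k) / fact k * (x - 1) ^ k"
    unfolding fact_Suc by simp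
  ultimately have "((\<lambda>x::real. a (Suc k) / fact (Suc k) * (x - 1) ^ Suc k) has_real_derivative
      a (Suc k) / fact k * (x - 1) ^ k) (at x)"
    by simp
  from DERIV_add[OF Suc.IH this] show ?case
    by (simp add: sum.lessThan_Suc)
qed simp

lemma tendsto_at_left_1_of_has_derivative:
  "(f has_real_derivative f') (at 1 within {-1..1}) \<Longrightarrow> (f \<longlongrightarrow> f 1) (at_left (1::real))"
  by (drule DERIV_continuous) (simp add: continuous_within at_within_Icc_at_left)

lemma taylor_quotient_tendsto:
  fixes F :: "nat \<Rightarrow> real \<Rightarrow> real"
  assumes "\<And>j x. x \<in> {-1..1} \<Longrightarrow> (F j has_real_derivative F (Suc j) x) (at x within {-1..1})"
  shows "((\<lambda>x. (F 0 x - (\<Sum>j<k. F j 1 / fact j * (x - 1) ^ j)) / (x - 1) ^ k) \<longlongrightarrow> F k 1 / fact k) (at_left 1)"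
  using assms
proof (induction k arbitrary: F)
  case 0
  then have "(F 0 has_real_derivative F 1 1) (at 1 within {-1..1})" by simp
  then show ?case using tendsto_at_left_1_of_has_derivative by simp
next
  case (Suc k)
  let ?num = "\<lambda>x. F 0 x - (\<Sum>j<Suc k. F j 1 / fact j * (x - 1) ^ j)"
  let ?num' = "\<lambda>x. F 1 x - (\<Sum>j<k. F (Suc j) 1 / fact j * (x - 1) ^ j)"
  have interior: "eventually (\<lambda>x. x \<in> {-1<..<1}) (at_left (1::real))"
    by (rule eventually_at_left_real) simp
  have IH: "((\<lambda>x. ?num' x / (x - 1) ^ k) \<longlongrightarrow> F (Suc k) 1 / fact k) (at_left 1)"
    using Suc.IH[of "\<lambda>j. F (Suc j)"] Suc.prems by simp
  show ?case
  proof (rule lhopital_left[where f' = ?num' and g' = "\<lambda>x. real (Suc k) * (x - 1) ^ k"])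
    have "(F 0 has_real_derivative F 1 1) (at 1 within {-1..1})"
      using Suc.prems by simp
    then have "(?num \<longlongrightarrow> F 0 1 - (\<Sum>j<Suc k. F j 1 / fact j * (1 - 1) ^ j)) (at_left 1)"
      by (intro tendsto_intros tendsto_at_left_1_of_has_derivative)
    then show "(?num \<longlongrightarrow> 0) (at_left 1)"
      by (simp add: sum.lessThan_Suc_shift del: sum.lessThan_Suc)
    show "((\<lambda>x::real. (x - 1) ^ Suc k) \<longlongrightarrow> 0) (at_left 1)"
      by (rule tendsto_eq_intros refl | simp)+
    show "eventually (\<lambda>x::real. (x - 1) ^ Suc k \<noteq> 0) (at_left 1)"
      using interior by eventually_elim auto
    show "eventually (\<lambda>x::real. real (Suc k) * (x - 1) ^ k \<noteq> 0) (at_left 1)"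
      using interior by eventually_elim auto
    show "eventually (\<lambda>x. (?num has_real_derivative ?num' x) (at x)) (at_left 1)"
      using interior
    proof eventually_elim
      case (elim x)
      then have "(F 0 has_real_derivative F 1 x) (at x)"
        using Suc.prems[of x 0] at_within_Icc_at[of "-1" x 1] by auto
      then show ?case
        using DERIV_diff[OF _ has_real_derivative_taylor_poly[of "\<lambda>j. F j 1" k x]] by auto
    qed
    show "eventually (\<lambda>x. ((\<lambda>x::real. (x - 1) ^ Suc k) has_real_derivative real (Suc k) * (x - 1) ^ k) (at x)) (at_left 1)"
    proof (intro always_eventually allI)
      fix x :: real
      have "((\<lambda>x. x - 1) has_real_derivative 1) (at x)"
        by (auto intro!: derivative_eq_intros)
      from DERIV_power[OF this, of "Suc k"]
      show "((\<lambda>x. (x - 1) ^ Suc k) has_real_derivative real (Suc k) * (x - 1) ^ k) (at x)"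
        by simp
    qed
    have "((\<lambda>x. ?num' x / (x - 1) ^ k / real (Suc k)) \<longlongrightarrow> F (Suc k) 1 / fact k / real (Suc k)) (at_left 1)"
      by (intro tendsto_divide IH tendsto_const) auto
    then show "((\<lambda>x. ?num' x / (real (Suc k) * (x - 1) ^ k)) \<longlongrightarrow> F (Suc k) 1 / fact (Suc k)) (at_left 1)"
      by (simp add: fact_Suc field_simps)
  qed
qed

definition taylor_quot :: "(real \<Rightarrow> real) \<Rightarrow> (nat \<Rightarrow> real \<Rightarrow> real) \<Rightarrow> int \<Rightarrow> real \<Rightarrow> real" where
  "taylor_quot E D m x = (x - 1) powi m * taylor_rem E D (- m) x"

lemma Psi_eq_wip_taylor_quot: "Psi E D n m t = wip (alpha_idx n) (chebJ t (alpha_idx n)) (taylor_quot E D m)"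
  unfolding Psi_def taylor_quot_def[abs_def] ..

lemma taylor_rem_of_nat: "taylor_rem E D (int j) x = E x - (\<Sum>i<j. D i 1 / fact i * (x - 1) ^ i)"
  unfolding taylor_rem_def by (cases "j = 0") auto

lemma smooth_with_derivs_continuous:
  assumes "smooth_with_derivs E D" "x \<in> {-1..1}"
  shows "continuous (at x within {-1..1}) (D j)"
  using assms unfolding smooth_with_derivs_def by (blast intro: DERIV_continuous)

lemma smooth_with_derivs_continuous_on:
  assumes "smooth_with_derivs E D"
  shows "continuous_on {-1..1} E"
proof -
  have "continuous_on {-1..1} (D 0)"
    using smooth_with_derivs_continuous[OF assms] by (simp add: continuous_on_eq_continuous_within)
  moreover have "\<And>x. x \<in> {-1..1} \<Longrightarrow> D 0 x = E x"
    using assms unfolding smooth_with_derivs_def by auto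
  ultimately show ?thesis using continuous_on_cong by blast
qed

text \<open>For \<open>m < 0\<close> the quotient has a removable singularity at \<open>1\<close>, with value \<open>D (-m) 1 / (-m)!\<close>.\<close>

lemma taylor_quot_continuous_extension:
  assumes sm: "smooth_with_derivs E D"
  shows "\<exists>G. continuous_on {-1..1} G \<and> (\<forall>x\<in>{-1..<1}. G x = taylor_quot E D m x)"
proof (cases "m \<ge> 0")
  case True
  have "taylor_quot E D m x = (x - 1) ^ nat m * E x" for x
    using True unfolding taylor_quot_def taylor_rem_def by (simp add: power_int_def)
  moreover have "continuous_on {-1..1} (\<lambda>x. (x - 1) ^ nat m * E x)"
    by (intro continuous_intros smooth_with_derivs_continuous_on[OF sm])
  ultimately show ?thesis
    by (intro exI[of _ "\<lambda>x. (x - 1) ^ nat m * E x"]) simp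
next
  case False
  define k where "k = nat (- m)"
  have m: "- m = int k" using False unfolding k_def by auto
  define Q where "Q x = (D 0 x - (\<Sum>j<k. D j 1 / fact j * (x - 1) ^ j)) / (x - 1) ^ k" for x
  define G where "G x = (if x = 1 then D k 1 / fact k else Q x)" for x
  have "taylor_quot E D m x = Q x" if "x \<in> {-1..1}" "x \<noteq> 1" for x
  proof -
    have "D 0 x = E x" using sm that unfolding smooth_with_derivs_def by auto
    moreover have "(x - 1) powi m = inverse ((x - 1) ^ k)"
    proof -
      have "m = - int k" using m by simp
      then show ?thesis by (simp add: power_int_minus)
    qed
    ultimately show ?thesis
      unfolding taylor_quot_def Q_def m taylor_rem_of_nat by (simp add: divide_inverse mult.commute)
  qed
  then have "G x = taylor_quot E D m x" if "x \<in> {-1..<1}" for x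
    using that by (simp add: G_def)
  moreover have "continuous (at x within {-1..1}) G" if x: "x \<in> {-1..1}" for x
  proof (cases "x = 1")
    case True
    have "(Q \<longlongrightarrow> D k 1 / fact k) (at_left 1)"
      unfolding Q_def
      by (rule taylor_quotient_tendsto) (use sm in \<open>auto simp: smooth_with_derivs_def\<close>)
    then have "(G \<longlongrightarrow> D k 1 / fact k) (at_left 1)"
      by (rule Lim_transform_eventually) (auto simp: G_def eventually_at_filter)
    then show ?thesis
      using True by (simp add: continuous_within at_within_Icc_at_left G_def)
  next
    case False
    have "continuous (at x within {-1..1}) Q"
      unfolding Q_def using False
      by (intro continuous_intros smooth_with_derivs_continuous[OF sm x]) auto
    then have "(Q \<longlongrightarrow> Q x) (at x within {-1..1})"
      by (simp add: continuous_within)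
    moreover have "eventually (\<lambda>y. y \<noteq> 1) (at x within {-1..1})"
      unfolding eventually_at using False
      by (intro exI[of _ "\<bar>x - 1\<bar>"]) (auto simp: dist_real_def)
    then have "eventually (\<lambda>y. Q y = G y) (at x within {-1..1})"
      by eventually_elim (simp add: G_def)
    ultimately have "(G \<longlongrightarrow> Q x) (at x within {-1..1})"
      by (rule Lim_transform_eventually)
    then show ?thesis
      using False by (simp add: continuous_within G_def)
  qed
  ultimately show ?thesis
    by (intro exI[of _ G]) (auto simp: continuous_on_eq_continuous_within)
qed

lemma taylor_quot_recurrence:
  assumes "x \<noteq> 1"
  shows "taylor_quot E D m x = (x - 1) * taylor_quot E D (m - 1) x + (if m \<le> 0 then D (nat (-m)) 1 / fact (nat (-m)) else 0)"
proof -
  have y: "x - 1 \<noteq> 0" using assms by auto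
  have pw: "(x-1) powi m = (x-1) * (x-1) powi (m-1)"
    using power_int_add[of "x-1" 1 "m-1"] y by simp
  show ?thesis
  proof (cases "m \<le> 0")
    case False
    then show ?thesis unfolding taylor_quot_def taylor_rem_def using pw by simp
  next
    case True
    define j where "j = nat (-m)"
    have mj: "-m = int j" "1 - m = int (Suc j)" using True unfolding j_def by auto
    have r: "taylor_rem E D (- (m-1)) x = taylor_rem E D (- m) x - D j 1 / fact j * (x-1)^j"
    proof -
      have e1: "- (m - 1) = int (Suc j)" using mj by simp
      show ?thesis unfolding e1 mj(1) taylor_rem_of_nat by simp
    qed
    have inv: "(x-1) powi m * (x-1)^j = 1"
    proof -
      have "m = - int j" using mj by simp
      then show ?thesis using y by (simp add: power_int_minus)
    qed
    have "(x - 1) * taylor_quot E D (m - 1) x = (x-1) powi m * (taylor_rem E D (- m) x - D j 1 / fact j * (x-1)^j)"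
      unfolding taylor_quot_def r using pw by (simp add: mult.assoc)
    also have "\<dots> = taylor_quot E D m x - D j 1 / fact j * ((x-1) powi m * (x-1)^j)"
      unfolding taylor_quot_def by (simp add: algebra_simps)
    finally show ?thesis using inv True j_def by simp
  qed
qed

section \<open>The recurrences for \<open>\<Psi>\<close>\<close>

lemma wip_cong:
  assumes "\<And>x. x \<in> {-1..<1} \<Longrightarrow> f x * g x = f' x * g' x"
  shows "wip a f g = wip a f' g'"
proof -
  have "integral {-1..1} (\<lambda>x. f' x * g' x * (1 - x) powr a * (1 + x) powr (1/2)) =
        integral {-1..1} (\<lambda>x. f x * g x * (1 - x) powr a * (1 + x) powr (1/2))"
    by (rule integral_spike[of "{1}"]) (use assms in auto)
  then show ?thesis unfolding wip_def by simp
qed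

lemma wip_second_kind_eq_third_kind_diff:
  assumes cG: "continuous_on {-1..1} G"
  shows "wip (1/2) (chebJ t (1/2)) G = wip (-1/2) (chebJ t (-1/2)) G - wip (-1/2) (chebJ (Suc t) (-1/2)) G"
proof -
  let ?V = "\<lambda>t x. chebJ t (-1/2) x * G x * cheb_weight (-1/2) x"
  have int: "?V t integrable_on {-1..1}" for t
    by (auto intro!: integrable_cheb_weight continuous_intros continuous_on_chebJ cG)
  have "integral {-1..1} (?V t) - integral {-1..1} (?V (Suc t)) = integral {-1..1} (\<lambda>x. ?V t x - ?V (Suc t) x)"
    by (rule integral_diff[OF int int, symmetric])
  also have "\<dots> = integral {-1..1} (\<lambda>x. 2 * (chebJ t (1/2) x * G x * cheb_weight (1/2) x))"
  proof (rule integral_cong)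
    fix x :: real assume x: "x \<in> {-1..1}"
    have "?V t x - ?V (Suc t) x = (chebJ t (-1/2) x - chebJ (Suc t) (-1/2) x) * G x * cheb_weight (-1/2) x"
      by (simp add: algebra_simps)
    also have "\<dots> = 2 * chebJ t (1/2) x * G x * ((1 - x) * cheb_weight (-1/2) x)"
      by (simp only: chebJ_second_kind_telescope[symmetric]) (simp add: algebra_simps)
    also have "\<dots> = 2 * (chebJ t (1/2) x * G x * cheb_weight (1/2) x)"
      using x cheb_weight_half_eq[of x] by simp
    finally show "?V t x - ?V (Suc t) x = 2 * (chebJ t (1/2) x * G x * cheb_weight (1/2) x)" .
  qed
  also have "\<dots> = 2 * integral {-1..1} (\<lambda>x. chebJ t (1/2) x * G x * cheb_weight (1/2) x)"
    by simp
  finally show ?thesis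
    unfolding wip_eq_integral_cheb_weight by (simp add: algebra_simps diff_divide_distrib[symmetric])
qed

lemma wip_third_kind_affine_eq_second_kind_diff:
  assumes cH: "continuous_on {-1..1} H"
  shows "2 * wip (-1/2) (chebJ (Suc t) (-1/2)) (\<lambda>x. (x - 1) * H x + c) =
     wip (1/2) (chebJ t (1/2)) H - wip (1/2) (chebJ (Suc t) (1/2)) H"
proof -
  let ?V = "\<lambda>x. chebJ (Suc t) (-1/2) x * ((x - 1) * H x) * cheb_weight (-1/2) x"
  let ?W = "\<lambda>x. chebJ (Suc t) (-1/2) x * chebJ 0 (-1/2) x * cheb_weight (-1/2) x"
  let ?U = "\<lambda>t x. chebJ t (1/2) x * H x * cheb_weight (1/2) x"
  have intV: "?V integrable_on {-1..1}" and intW: "?W integrable_on {-1..1}"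
    by (auto intro!: integrable_cheb_weight continuous_intros continuous_on_chebJ cH)
  have intU: "?U t integrable_on {-1..1}" for t
    by (auto intro!: integrable_cheb_weight continuous_intros continuous_on_chebJ cH)
  have orth: "integral {-1..1} ?W = 0"
    using wip_chebJ_third_kind_orthonormal[of "Suc t" 0] unfolding wip_eq_integral_cheb_weight by simp
  have "integral {-1..1} (\<lambda>x. chebJ (Suc t) (-1/2) x * ((x - 1) * H x + c) * cheb_weight (-1/2) x)
      = integral {-1..1} (\<lambda>x. ?V x + c * ?W x)"
    by (rule integral_cong) (simp add: algebra_simps)
  also have "\<dots> = integral {-1..1} ?V"
    using integral_add[OF intV integrable_on_cmult_left[OF intW, of c]] orth by simp
  also have "\<dots> = integral {-1..1} (\<lambda>x. ?U t x - ?U (Suc t) x)"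
  proof (rule integral_cong)
    fix x :: real assume "x \<in> {-1..1}"
    then have w: "(1 - x) * cheb_weight (-1/2) x = cheb_weight (1/2) x"
      by (intro cheb_weight_half_eq) simp
    have "?V x = - ((chebJ (Suc t) (1/2) x - chebJ t (1/2) x) * H x * ((1 - x) * cheb_weight (-1/2) x))"
      by (simp only: chebJ_third_kind_eq_diff) (simp add: algebra_simps)
    also have "\<dots> = ?U t x - ?U (Suc t) x"
      unfolding w by (simp add: algebra_simps)
    finally show "?V x = ?U t x - ?U (Suc t) x" .
  qed
  also have "\<dots> = integral {-1..1} (?U t) - integral {-1..1} (?U (Suc t))"
    by (rule integral_diff[OF intU intU])
  finally show ?thesis
    unfolding wip_eq_integral_cheb_weight by (simp add: algebra_simps diff_divide_distrib[symmetric])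
qed

lemma Psi_eq_wip_extension:
  assumes "\<forall>x\<in>{-1..<1}. G x = taylor_quot E D m x"
  shows "Psi E D n m t = wip (alpha_idx n) (chebJ t (alpha_idx n)) G"
  unfolding Psi_eq_wip_taylor_quot by (rule wip_cong) (simp add: assms)

lemma Psi_tendsto_zero:
  assumes "smooth_with_derivs E D"
  shows "Psi E D n m \<longlonglongrightarrow> 0"
proof -
  obtain G where G: "continuous_on {-1..1} G" "\<forall>x\<in>{-1..<1}. G x = taylor_quot E D m x"
    using taylor_quot_continuous_extension[OF assms, where m=m] by blast
  have "alpha_idx n = 1/2 \<or> alpha_idx n = -1/2"
    by (simp add: alpha_idx_def)
  moreover have "Psi E D n m = (\<lambda>t. wip (alpha_idx n) (chebJ t (alpha_idx n)) G)"
    using Psi_eq_wip_extension[OF G(2)] by (rule ext)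
  ultimately show ?thesis
    using wip_chebJ_tendsto_zero[OF _ G(1)] by simp
qed

lemma Psi_Suc_of_odd:
  assumes "smooth_with_derivs E D" and "odd k"
  shows "Psi E D (Suc k) m t = Psi E D k m t - Psi E D k m (Suc t)"
proof -
  obtain G where G: "continuous_on {-1..1} G" "\<forall>x\<in>{-1..<1}. G x = taylor_quot E D m x"
    using taylor_quot_continuous_extension[OF assms(1), where m=m] by blast
  have alpha: "alpha_idx (Suc k) = 1/2" "alpha_idx k = -1/2"
    using assms(2) by (simp_all add: alpha_idx_def)
  show ?thesis
    unfolding Psi_eq_wip_extension[OF G(2)] alpha by (rule wip_second_kind_eq_third_kind_diff[OF G(1)])
qed

lemma Psi_Suc_of_even:
  assumes "smooth_with_derivs E D" and "even k"
  shows "2 * Psi E D (Suc k) m (Suc t) = Psi E D k (m - 1) t - Psi E D k (m - 1) (Suc t)"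
proof -
  obtain H where H: "continuous_on {-1..1} H" "\<forall>x\<in>{-1..<1}. H x = taylor_quot E D (m - 1) x"
    using taylor_quot_continuous_extension[OF assms(1), where m="m - 1"] by blast
  define c where "c = (if m \<le> 0 then D (nat (- m)) 1 / fact (nat (- m)) else 0)"
  have alpha: "alpha_idx (Suc k) = -1/2" "alpha_idx k = 1/2"
    using assms(2) by (simp_all add: alpha_idx_def)
  have "Psi E D (Suc k) m (Suc t) = wip (-1/2) (chebJ (Suc t) (-1/2)) (\<lambda>x. (x - 1) * H x + c)"
    unfolding Psi_eq_wip_taylor_quot alpha
  proof (rule wip_cong)
    fix x :: real assume x: "x \<in> {-1..<1}"
    then show "chebJ (Suc t) (-1/2) x * taylor_quot E D m x = chebJ (Suc t) (-1/2) x * ((x - 1) * H x + c)"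
      using taylor_quot_recurrence[of x E D m] H(2) by (simp add: c_def)
  qed
  then show ?thesis
    using wip_third_kind_affine_eq_second_kind_diff[OF H(1), of t c]
    unfolding Psi_eq_wip_extension[OF H(2)] alpha by simp
qed

lemma sums_telescope_from:
  fixes b :: "nat \<Rightarrow> 'a::real_normed_vector"
  assumes "b \<longlonglongrightarrow> 0"
  shows "(\<lambda>t. if s \<le> t then b t - b (Suc t) else 0) sums b s"
proof -
  let ?f = "\<lambda>t. if s \<le> t then b t - b (Suc t) else 0"
  have "(\<lambda>t. b (t + s) - b (Suc (t + s))) sums (b (0 + s) - 0)"
    using telescope_sums'[OF LIMSEQ_ignore_initial_segment[OF assms, of s]] by simp
  then have "(\<lambda>t. ?f (t + s)) sums b s"
    by simp
  from sums_iff_shift[of ?f s, THEN iffD1, OF this] show ?thesis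
    by simp
qed

theorem proposition3p1:
  fixes E :: "real \<Rightarrow> real" and D :: "nat \<Rightarrow> real \<Rightarrow> real"
    and n :: nat and l :: int and s :: nat
  assumes "smooth_with_derivs E D"
    and "n \<ge> 1"
  shows "(\<lambda>t. phi_idx (n - 1) s t * Psi E D n (int (r_idx n) - l) t)
           sums Psi E D (n - 1) (int (r_idx (n - 1)) - l) s"
proof -
  obtain k where n: "n = Suc k" using assms(2) by (cases n) auto
  define m where "m = int (r_idx n) - l"
  note telescope = sums_telescope_from[OF Psi_tendsto_zero[OF assms(1)], of s]
  show ?thesis
  proof (cases "even k")
    case True
    have step: "phi_idx k s (Suc t) * Psi E D n m (Suc t)
        = (if s \<le> t then Psi E D k (m - 1) t - Psi E D k (m - 1) (Suc t) else 0)" for t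
      using True Psi_Suc_of_even[OF assms(1) True, of m t] unfolding n phi_idx_def by auto
    have "(\<lambda>t. phi_idx k s (Suc t) * Psi E D n m (Suc t)) sums Psi E D k (m - 1) s"
      unfolding step by (rule telescope)
    from sums_Suc_iff[THEN iffD1, OF this]
    have "(\<lambda>t. phi_idx k s t * Psi E D n m t) sums Psi E D k (m - 1) s"
      using True by (simp add: phi_idx_def)
    moreover have "int (r_idx (n - 1)) - l = m - 1"
      using True unfolding m_def n r_idx_def by (auto elim: evenE)
    ultimately show ?thesis
      unfolding m_def[symmetric] by (simp add: n)
  next
    case False
    have step: "phi_idx k s t * Psi E D n m t
        = (if s \<le> t then Psi E D k m t - Psi E D k m (Suc t) else 0)" for t
      using False Psi_Suc_of_odd[OF assms(1) False, of m t] unfolding n phi_idx_def by auto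
    have "(\<lambda>t. phi_idx k s t * Psi E D n m t) sums Psi E D k m s"
      unfolding step by (rule telescope)
    moreover have "r_idx k = r_idx n"
      using False unfolding n r_idx_def by (auto elim: oddE)
    ultimately show ?thesis
      unfolding m_def n by simp
  qed
qed

end
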